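(* Let $\Sigma_2=\{1,2\}^{\mathbb{Z}}$ with the infinite product topology, let $T\colon\Sigma_2\to\Sigma_2$ be the shift $T[(x_n)_{n\in\mathbb{Z}}]=(x_{n+1})_{n\in\mathbb{Z}}$, and let $d$ be any metric on $\Sigma_2$ which generates the product topology. Then there exist functions $f,g\colon\Sigma_2\to(0,1]$ and $\phi\colon\Sigma_2\to\mathbb{R}$, all Lipschitz continuous with respect to $d$, such that the function $A\colon\Sigma_2\to\mathrm{GL}_2(\mathbb{R})$, \[A(x):=\begin{pmatrix}f(x)&\phi(x)\\0&g(x)\end{pmatrix},\] satisfies \[\lim_{n\to\infty}\sup_{x\in\Sigma_2}\|A(T^{n-1}x)\cdots A(x)\|^{1/n}=1,\qquad \lim_{n\to\infty}\frac1n\sup_{x\in\Sigma_2}\|A(T^{n-1}x)\cdots A(x)\|=0,\] and \[\sup_{n\ge1}\sup_{x\in\Sigma_2}\|A(T^{n-1}x)\cdots A(x)\|=\infty.\]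
   Context: $\|\cdot\|$ is the Euclidean operator norm on $2\times 2$ real matrices. *)

theory Defs
  imports "HOL-Analysis.Analysis"
begin

definition Sigma2 :: "(int \<Rightarrow> nat) set" where
  "Sigma2 = PiE UNIV (\<lambda>_. {1, 2})"

definition prod_top :: "(int \<Rightarrow> nat) topology" where
  "prod_top = product_topology (\<lambda>_. discrete_topology {1, 2}) UNIV"

definition shift :: "(int \<Rightarrow> nat) \<Rightarrow> (int \<Rightarrow> nat)" where
  "shift x = (\<lambda>n. x (n + 1))"

definition lipschitz_wrt :: "('a \<Rightarrow> 'a \<Rightarrow> real) \<Rightarrow> 'a set \<Rightarrow> ('a \<Rightarrow> real) \<Rightarrow> bool" where
  "lipschitz_wrt d S h \<longleftrightarrow> (\<exists>L. \<forall>x\<in>S. \<forall>y\<in>S. \<bar>h x - h y\<bar> \<le> L * d x y)"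

definition opnorm :: "real^2^2 \<Rightarrow> real" where
  "opnorm M = onorm (\<lambda>v. M *v v)"

definition uptri :: "real \<Rightarrow> real \<Rightarrow> real \<Rightarrow> real^2^2" where
  "uptri a b c = vector [vector [a, b], vector [0, c]]"

fun cocycle :: "('a \<Rightarrow> real^2^2) \<Rightarrow> ('a \<Rightarrow> 'a) \<Rightarrow> nat \<Rightarrow> 'a \<Rightarrow> real^2^2" where
  "cocycle A T 0 x = mat 1"
| "cocycle A T (Suc n) x = A ((T ^^ n) x) ** cocycle A T n x"

end

theory Submission
  imports Defs "HOL-Real_Asymp.Real_Asymp"
begin

text \<open>
  Let \<open>H\<close> be the set of sequences containing the symbol 2 at most once, \<open>\<phi>(x) = min 1 (d(x, H))\<close>
  and \<open>f = g = 1 - \<phi>\<^sup>2/2\<close>. As \<open>A\<close> is scalar on the diagonal, its cocycle is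
  \<open>P\<^sub>n(x) [[1, S\<^sub>n(x)], [0, 1]]\<close> with \<open>P\<^sub>n = \<Prod> f(T\<^sup>k x)\<close> and \<open>S\<^sub>n = \<Sum> \<phi>(T\<^sup>k x) / f(T\<^sup>k x)\<close>.
  With \<open>Q = \<Sum> \<phi>(T\<^sup>k x)\<^sup>2\<close> one has \<open>P\<^sub>n \<le> exp (-Q/2)\<close> and \<open>S\<^sub>n \<le> 2 sqrt (n Q)\<close>, so the norm grows
  at most like \<open>sqrt n\<close>, while at the fixed point \<open>\<dots>111\<dots>\<close> of \<open>H\<close> it is at least 1.
  Conversely, by compactness \<open>d\<close> is uniformly small on pairs agreeing on a long window, so the
  orbit of the periodic point with a 2 at every multiple of a large \<open>N\<close> stays \<open>\<epsilon>\<close>-close to \<open>H\<close>;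
  along it \<open>\<phi> \<le> \<epsilon>\<close> is periodic and positive, hence not summable. Stopping when its partial sum
  first exceeds \<open>1/(2\<epsilon>)\<close> keeps \<open>Q \<le> 1\<close>, hence \<open>P\<^sub>n \<ge> 1/2\<close>, and the norm is at least \<open>1/(4\<epsilon>)\<close>.
\<close>

section \<open>The full shift and its cylinders\<close>

lemma Sigma2_iff: "x \<in> Sigma2 \<longleftrightarrow> (\<forall>i. x i = 1 \<or> x i = 2)"
  by (auto simp: Sigma2_def PiE_def extensional_def)

lemma topspace_prod_top: "topspace prod_top = Sigma2"
  by (simp add: prod_top_def Sigma2_def)

lemma compact_space_prod_top: "compact_space prod_top"
  unfolding prod_top_def
  by (subst compact_space_product_topology) (auto simp: compact_space_discrete_topology)

lemma funpow_shift: "(shift ^^ k) x = (\<lambda>i. x (i + int k))"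
  by (induction k) (auto simp: shift_def algebra_simps)

lemma funpow_shift_in_Sigma2: "x \<in> Sigma2 \<Longrightarrow> (shift ^^ k) x \<in> Sigma2"
  by (simp add: funpow_shift Sigma2_iff)

definition cylinder :: "(int \<Rightarrow> nat) \<Rightarrow> nat \<Rightarrow> (int \<Rightarrow> nat) set" where
  "cylinder x R = {y \<in> Sigma2. \<forall>i. \<bar>i\<bar> \<le> int R \<longrightarrow> y i = x i}"

lemma self_in_cylinder: "x \<in> Sigma2 \<Longrightarrow> x \<in> cylinder x R"
  by (simp add: cylinder_def)

lemma cylinder_eq_PiE:
  assumes "x \<in> Sigma2"
  shows "cylinder x R = PiE UNIV (\<lambda>i. if \<bar>i\<bar> \<le> int R then {x i} else {1, 2})"
proof (intro set_eqI iffI)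
  fix y assume "y \<in> cylinder x R"
  then show "y \<in> PiE UNIV (\<lambda>i. if \<bar>i\<bar> \<le> int R then {x i} else {1, 2})"
    unfolding cylinder_def Sigma2_iff by (auto simp: PiE_def extensional_def Pi_def)
next
  fix y assume y: "y \<in> PiE UNIV (\<lambda>i. if \<bar>i\<bar> \<le> int R then {x i} else {1, 2})"
  have "y i = 1 \<or> y i = 2" for i
    using y assms PiE_mem[OF y, of i] by (auto simp: Sigma2_iff split: if_splits)
  moreover have "\<bar>i\<bar> \<le> int R \<Longrightarrow> y i = x i" for i
    using PiE_mem[OF y, of i] by auto
  ultimately show "y \<in> cylinder x R"
    by (auto simp: cylinder_def Sigma2_iff)
qed

lemma openin_cylinder:
  assumes "x \<in> Sigma2"
  shows "openin prod_top (cylinder x R)"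
proof -
  have "finite {i. (if \<bar>i\<bar> \<le> int R then {x i} else {1, 2}) \<noteq> {1::nat, 2}}"
    by (rule finite_subset[of _ "{-int R..int R}"]) (auto split: if_splits)
  moreover have "openin (discrete_topology {1::nat, 2}) (if \<bar>i\<bar> \<le> int R then {x i} else {1, 2})" for i
    using assms by (auto simp: Sigma2_iff)
  ultimately show ?thesis
    unfolding cylinder_eq_PiE[OF assms] prod_top_def by (subst openin_PiE_gen) auto
qed

lemma cylinder_subset_openin:
  assumes "openin prod_top U" "x \<in> U"
  obtains R where "cylinder x R \<subseteq> U"
proof -
  obtain V where V: "finite {i \<in> UNIV. V i \<noteq> topspace (discrete_topology {1::nat, 2})}"
      "x \<in> PiE UNIV V" "PiE UNIV V \<subseteq> U"
    using assms unfolding prod_top_def openin_product_topology_alt by blast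
  define F where "F = {i \<in> UNIV. V i \<noteq> {1::nat, 2}}"
  have "finite F" using V(1) by (simp add: F_def)
  define R where "R = nat (\<Sum>i\<in>F. \<bar>i\<bar>)"
  have "cylinder x R \<subseteq> PiE UNIV V"
  proof
    fix y assume y: "y \<in> cylinder x R"
    have "y i \<in> V i" for i
    proof (cases "i \<in> F")
      case True
      have "\<bar>i\<bar> \<le> (\<Sum>i\<in>F. \<bar>i\<bar>)"
        using member_le_sum[OF True, of abs] \<open>finite F\<close> by auto
      then have "\<bar>i\<bar> \<le> int R" by (simp add: R_def)
      then have "y i = x i" using y by (simp add: cylinder_def)
      then show ?thesis using V(2) by auto
    next
      case False
      then have "V i = {1, 2}" by (simp add: F_def)
      then show ?thesis using y by (auto simp: cylinder_def Sigma2_iff)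
    qed
    then show "y \<in> PiE UNIV V" by (simp add: PiE_def extensional_def Pi_def)
  qed
  then have "cylinder x R \<subseteq> U"
    using V(3) by (rule subset_trans)
  then show thesis
    by (rule that)
qed

section \<open>Upper triangular 2x2 matrices\<close>

lemma uptri_nth:
  "uptri a b c $ 1 $ 1 = a" "uptri a b c $ 1 $ 2 = b"
  "uptri a b c $ 2 $ 1 = 0" "uptri a b c $ 2 $ 2 = c"
  by (simp_all add: uptri_def)

lemma uptri_mult: "uptri a b c ** uptri a' b' c' = uptri (a * a') (a * b' + b * c') (c * c')"
  by (simp add: vec_eq_iff forall_2 matrix_matrix_mult_def sum_2 uptri_nth)

lemma mat_1_eq_uptri: "(mat 1 :: real^2^2) = uptri 1 0 1"
  by (simp add: vec_eq_iff forall_2 mat_def uptri_nth)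

lemma uptri_mult_vec_nth:
  "(uptri a b c *v v) $ 1 = a * v $ 1 + b * v $ 2" "(uptri a b c *v v) $ 2 = c * v $ 2"
  by (simp_all add: matrix_vector_mult_def sum_2 uptri_nth)

lemma abs_le_opnorm_uptri: "\<bar>b\<bar> \<le> opnorm (uptri a b c)" "\<bar>c\<bar> \<le> opnorm (uptri a b c)"
proof -
  let ?v = "axis 2 1 :: real^2"
  have "norm (uptri a b c *v ?v) \<le> opnorm (uptri a b c) * norm ?v"
    unfolding opnorm_def by (rule onorm) simp
  then have "norm (uptri a b c *v ?v) \<le> opnorm (uptri a b c)" by simp
  moreover have "(uptri a b c *v ?v) $ 1 = b" "(uptri a b c *v ?v) $ 2 = c"
    by (simp_all add: uptri_mult_vec_nth axis_def)
  ultimately show "\<bar>b\<bar> \<le> opnorm (uptri a b c)" "\<bar>c\<bar> \<le> opnorm (uptri a b c)"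
    using component_le_norm_cart[of "uptri a b c *v ?v" 1] component_le_norm_cart[of "uptri a b c *v ?v" 2]
    by auto
qed

lemma opnorm_uptri_le: "opnorm (uptri a b c) \<le> \<bar>a\<bar> + \<bar>b\<bar> + \<bar>c\<bar>"
  unfolding opnorm_def
proof (rule onorm_le)
  fix v :: "real^2"
  have "norm (uptri a b c *v v) \<le> \<bar>a * v $ 1 + b * v $ 2\<bar> + \<bar>c * v $ 2\<bar>"
    using norm_le_l1_cart[of "uptri a b c *v v"] by (simp add: sum_2 uptri_mult_vec_nth)
  also have "\<dots> \<le> \<bar>a\<bar> * \<bar>v $ 1\<bar> + \<bar>b\<bar> * \<bar>v $ 2\<bar> + \<bar>c\<bar> * \<bar>v $ 2\<bar>"
    by (simp add: abs_mult abs_triangle_ineq[THEN order_trans])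
  also have "\<dots> \<le> \<bar>a\<bar> * norm v + \<bar>b\<bar> * norm v + \<bar>c\<bar> * norm v"
    by (intro add_mono mult_left_mono component_le_norm_cart) auto
  finally show "norm (uptri a b c *v v) \<le> (\<bar>a\<bar> + \<bar>b\<bar> + \<bar>c\<bar>) * norm v"
    by (simp add: algebra_simps)
qed

lemma cocycle_uptri_scalar_diag:
  assumes "\<And>y. a y \<noteq> 0"
  shows "cocycle (\<lambda>y. uptri (a y) (b y) (a y)) T n x =
    uptri (\<Prod>k<n. a ((T ^^ k) x))
      ((\<Prod>k<n. a ((T ^^ k) x)) * (\<Sum>k<n. b ((T ^^ k) x) / a ((T ^^ k) x)))
      (\<Prod>k<n. a ((T ^^ k) x))"
proof (induction n)
  case 0
  then show ?case by (simp add: mat_1_eq_uptri)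
next
  case (Suc n)
  then show ?case using assms[of "(T ^^ n) x"] by (simp add: uptri_mult algebra_simps)
qed

section \<open>Real inequalities and limits\<close>

lemma prod_one_minus_le_exp:
  fixes b :: "'a \<Rightarrow> real"
  assumes "\<And>k. k \<in> A \<Longrightarrow> b k \<le> 1"
  shows "(\<Prod>k\<in>A. 1 - b k) \<le> exp (- (\<Sum>k\<in>A. b k))"
proof -
  have "(\<Prod>k\<in>A. 1 - b k) \<le> (\<Prod>k\<in>A. exp (- b k))"
  proof (rule prod_mono)
    fix k assume "k \<in> A"
    then show "0 \<le> 1 - b k \<and> 1 - b k \<le> exp (- b k)"
      using assms exp_ge_add_one_self[of "- b k"] by auto
  qed
  also have "\<dots> = exp (- (\<Sum>k\<in>A. b k))"
    by (cases "finite A") (simp_all add: exp_sum flip: sum_negf)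
  finally show ?thesis .
qed

lemma sqrt_mult_exp_neg_half_le_1:
  assumes "0 \<le> q"
  shows "sqrt q * exp (- q / 2) \<le> 1"
proof -
  have "q \<le> exp q"
    using exp_ge_add_one_self[of q] by linarith
  also have "exp q = (exp (q / 2))\<^sup>2"
    by (simp add: power2_eq_square flip: exp_add)
  finally have "q \<le> (exp (q / 2))\<^sup>2" .
  then have "sqrt q \<le> exp (q / 2)"
    by (intro real_le_lsqrt) simp_all
  then have "sqrt q * exp (- q / 2) \<le> exp (q / 2) * exp (- q / 2)"
    by (rule mult_right_mono) simp
  also have "\<dots> = 1"
    by (simp flip: exp_add)
  finally show ?thesis .
qed

lemma prod_times_sum_le_sqrt:
  fixes a :: "nat \<Rightarrow> real"
  assumes a: "\<And>k. 0 \<le> a k" "\<And>k. a k \<le> 1"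
  shows "(\<Prod>k<n. 1 - (a k)\<^sup>2 / 2) * (\<Sum>k<n. a k / (1 - (a k)\<^sup>2 / 2)) \<le> 2 * sqrt (real n)"
proof -
  define Q where "Q = (\<Sum>k<n. (a k)\<^sup>2)"
  have sq: "(a k)\<^sup>2 \<le> 1" for k using a[of k] by (simp add: power_le_one)
  have "a k / (1 - (a k)\<^sup>2 / 2) \<le> 2 * a k" for k
    using sq[of k] a(1)[of k] by (simp add: divide_le_eq algebra_simps mult_left_le)
  then have "(\<Sum>k<n. a k / (1 - (a k)\<^sup>2 / 2)) \<le> 2 * (\<Sum>k<n. a k)"
    by (simp add: sum_distrib_left sum_mono)
  also have "(\<Sum>k<n. a k) \<le> sqrt (real n) * sqrt Q"
    using sum_squared_le_sum_of_squares[of a "{..<n}"]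
    by (simp add: Q_def real_le_rsqrt mult.commute flip: real_sqrt_mult)
  finally have sum_le: "(\<Sum>k<n. a k / (1 - (a k)\<^sup>2 / 2)) \<le> 2 * sqrt (real n) * sqrt Q"
    by simp
  have half_sq: "(a k)\<^sup>2 / 2 \<le> 1" for k
    using sq[of k] by simp
  then have prod_le: "(\<Prod>k<n. 1 - (a k)\<^sup>2 / 2) \<le> exp (- Q / 2)"
    using prod_one_minus_le_exp[of "{..<n}" "\<lambda>k. (a k)\<^sup>2 / 2"]
    by (simp add: Q_def sum_divide_distrib)
  have "(\<Prod>k<n. 1 - (a k)\<^sup>2 / 2) * (\<Sum>k<n. a k / (1 - (a k)\<^sup>2 / 2))
      \<le> exp (- Q / 2) * (2 * sqrt (real n) * sqrt Q)"
    using half_sq a by (intro mult_mono prod_le sum_le prod_nonneg sum_nonneg divide_nonneg_nonneg) auto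
  also have "\<dots> = 2 * sqrt (real n) * (sqrt Q * exp (- Q / 2))"
    by simp
  also have "\<dots> \<le> 2 * sqrt (real n)"
    using sqrt_mult_exp_neg_half_le_1[of Q] by (simp add: Q_def sum_nonneg mult_left_le)
  finally show ?thesis .
qed

lemma not_summable_periodic:
  fixes a :: "nat \<Rightarrow> 'a::real_normed_vector"
  assumes "0 < N" "\<And>k. a (k + N) = a k" "a 0 \<noteq> 0"
  shows "\<not> summable a"
proof
  assume "summable a"
  then have "(a \<circ> (\<lambda>j. j * N)) \<longlonglongrightarrow> 0"
    using assms(1) by (intro LIMSEQ_subseq_LIMSEQ summable_LIMSEQ_zero) (auto simp: strict_mono_def)
  moreover have "a (j * N) = a 0" for j
  proof (induction j)
    case (Suc j)
    then show ?case using assms(2)[of "j * N"] by (simp add: add.commute)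
  qed simp
  ultimately have "(\<lambda>j. a 0) \<longlonglongrightarrow> 0"
    by (simp add: o_def)
  then show False
    using assms(3) by (simp add: LIMSEQ_const_iff)
qed

lemma exists_prod_times_sum_ge:
  fixes a :: "nat \<Rightarrow> real"
  assumes e: "0 < e" "e \<le> 1/2" and a: "\<And>k. 0 \<le> a k" "\<And>k. a k \<le> e" and "\<not> summable a"
  shows "\<exists>n. 1 / (4 * e) \<le> (\<Prod>k<n. 1 - (a k)\<^sup>2 / 2) * (\<Sum>k<n. a k)"
proof -
  define s where "s n = (\<Sum>k<n. a k)" for n
  define T where "T = 1 / (2 * e)"
  have "\<exists>n. T \<le> s n"
  proof (rule ccontr)
    assume "\<nexists>n. T \<le> s n"
    then have "s (Suc n) < T" for n
      by (simp add: not_le)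
    then have "(\<Sum>k\<le>n. a k) \<le> T" for n
      by (simp add: s_def lessThan_Suc_atMost less_imp_le)
    then show False using bounded_imp_summable a(1) \<open>\<not> summable a\<close> by blast
  qed
  moreover have "\<not> T \<le> s 0" using e by (simp add: s_def T_def)
  ultimately obtain m where m: "s m < T" "T \<le> s (Suc m)"
    using ex_least_nat_less[of "\<lambda>n. T \<le> s n"] by (auto simp: not_le)
  define n where "n = Suc m"
  have "(\<Sum>k<n. (a k)\<^sup>2) \<le> (\<Sum>k<n. e * a k)"
    using a by (intro sum_mono) (simp add: power2_eq_square mult_right_mono)
  also have "\<dots> = e * s n" by (simp add: s_def sum_distrib_left)
  also have "\<dots> \<le> e * (T + e)"
    using m(1) a(2)[of m] e by (intro mult_left_mono) (auto simp: n_def s_def)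
  also have "\<dots> = 1 / 2 + e\<^sup>2" using e by (simp add: T_def field_simps power2_eq_square)
  also have "\<dots> \<le> 1" using mult_mono[of e "1 / 2" e "1 / 2"] e by (simp add: power2_eq_square)
  finally have sum_sq: "(\<Sum>k<n. (a k)\<^sup>2) \<le> 1" .
  have sq_le_1: "(a k)\<^sup>2 \<le> 1" for k
    using a[of k] e by (intro power_le_one) auto
  have sq_half: "(a k)\<^sup>2 / 2 \<in> {0..1}" for k
    using sq_le_1[of k] by simp
  have "1 - (\<Sum>k<n. (a k)\<^sup>2 / 2) \<le> (\<Prod>k<n. 1 - (a k)\<^sup>2 / 2)"
    by (rule Weierstrass_prod_ineq, rule sq_half)
  moreover have "(\<Sum>k<n. (a k)\<^sup>2 / 2) = (\<Sum>k<n. (a k)\<^sup>2) / 2"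
    by (rule sum_divide_distrib[symmetric])
  ultimately have "1 / 2 \<le> (\<Prod>k<n. 1 - (a k)\<^sup>2 / 2)"
    using sum_sq by linarith
  then have "1 / 2 * T \<le> (\<Prod>k<n. 1 - (a k)\<^sup>2 / 2) * s n"
    using m(2) e by (intro mult_mono) (auto simp: T_def n_def)
  then show ?thesis by (auto simp: T_def s_def)
qed

lemma powr_inverse_tendsto_1_if_sqrt_bounded:
  fixes u :: "nat \<Rightarrow> real"
  assumes "\<And>n. 1 \<le> u n" "\<And>n. u n \<le> 2 + 2 * sqrt (real n)"
  shows "(\<lambda>n. u n powr (1 / real n)) \<longlonglongrightarrow> 1"
proof (rule tendsto_sandwich[of "\<lambda>n. 1" _ _ "\<lambda>n. (2 + 2 * sqrt (real n)) powr (1 / real n)"])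
  show "\<forall>\<^sub>F n in sequentially. 1 \<le> u n powr (1 / real n)"
    using assms by (intro always_eventually allI ge_one_powr_ge_zero) auto
  show "\<forall>\<^sub>F n in sequentially. u n powr (1 / real n) \<le> (2 + 2 * sqrt (real n)) powr (1 / real n)"
    using assms by (intro always_eventually allI powr_mono2) (auto intro: order_trans[OF zero_le_one])
qed (simp, real_asymp)

lemma divide_tendsto_0_if_sqrt_bounded:
  fixes u :: "nat \<Rightarrow> real"
  assumes "\<And>n. 0 \<le> u n" "\<And>n. u n \<le> 2 + 2 * sqrt (real n)"
  shows "(\<lambda>n. u n / real n) \<longlonglongrightarrow> 0"
proof (rule tendsto_sandwich[of "\<lambda>n. 0" _ _ "\<lambda>n. (2 + 2 * sqrt (real n)) / real n"])
  show "\<forall>\<^sub>F n in sequentially. 0 \<le> u n / real n"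
    using assms by (intro always_eventually allI divide_nonneg_nonneg) auto
  show "\<forall>\<^sub>F n in sequentially. u n / real n \<le> (2 + 2 * sqrt (real n)) / real n"
    using assms by (intro always_eventually allI divide_right_mono) auto
qed (simp, real_asymp)

section \<open>Sequences with at most one symbol 2\<close>

definition at_most_one_two :: "(int \<Rightarrow> nat) set" where
  "at_most_one_two = {x \<in> Sigma2. \<forall>i j. x i = 2 \<and> x j = 2 \<longrightarrow> i = j}"

lemma const_1_in_at_most_one_two: "(\<lambda>_. 1) \<in> at_most_one_two"
  by (simp add: at_most_one_two_def Sigma2_iff)

definition periodic_two :: "nat \<Rightarrow> int \<Rightarrow> nat" where
  "periodic_two N = (\<lambda>i. if int N dvd i then 2 else 1)"

lemma periodic_two_in_Sigma2: "periodic_two N \<in> Sigma2"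
  by (simp add: periodic_two_def Sigma2_iff)

lemma funpow_shift_periodic_two: "(shift ^^ (k + N)) (periodic_two N) = (shift ^^ k) (periodic_two N)"
proof -
  have "i + int (k + N) = (i + int k) + int N" for i
    by simp
  then show ?thesis
    by (simp only: funpow_shift periodic_two_def dvd_add_triv_right_iff)
qed

lemma at_most_one_two_subset_Sigma2: "at_most_one_two \<subseteq> Sigma2"
  by (auto simp: at_most_one_two_def)

lemma window_periodic_two_in_at_most_one_two:
  "(\<lambda>i. if \<bar>i\<bar> \<le> int R then (shift ^^ k) (periodic_two (2 * R + 1)) i else 1) \<in> at_most_one_two"
    (is "?y \<in> _")
proof -
  have "i = j" if "?y i = 2" "?y j = 2" for i j
  proof (rule ccontr)
    let ?N = "int (2 * R + 1)"
    assume "i \<noteq> j"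
    from that have "\<bar>i\<bar> \<le> int R" "\<bar>j\<bar> \<le> int R" "?N dvd i + int k" "?N dvd j + int k"
      by (auto simp: funpow_shift periodic_two_def split: if_splits)
    then have "?N dvd i - j" and "\<bar>i - j\<bar> < ?N"
      using dvd_diff[of ?N "i + int k" "j + int k"] by auto
    with \<open>i \<noteq> j\<close> show False
      using dvd_imp_le_int[of "i - j" ?N] by auto
  qed
  then show ?thesis
    by (auto simp: at_most_one_two_def Sigma2_iff funpow_shift periodic_two_def)
qed

section \<open>The cocycle attached to a compatible metric\<close>

locale Sigma2_metric = Metric_space Sigma2 d for d :: "(int \<Rightarrow> nat) \<Rightarrow> (int \<Rightarrow> nat) \<Rightarrow> real" +
  assumes mtopology_eq_prod_top: "mtopology = prod_top"
begin

lemma mball_subset_cylinder: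
  assumes "x \<in> Sigma2"
  obtains r where "0 < r" "mball x r \<subseteq> cylinder x R"
proof -
  have "openin mtopology (cylinder x R)" "x \<in> cylinder x R"
    using openin_cylinder self_in_cylinder assms mtopology_eq_prod_top by auto
  then obtain r where "0 < r" "mball x r \<subseteq> cylinder x R"
    unfolding openin_mtopology by blast
  then show thesis
    by (rule that)
qed

lemma cylinder_subset_mball:
  assumes "x \<in> Sigma2" "0 < r"
  obtains R where "cylinder x R \<subseteq> mball x r"
proof -
  have "openin prod_top (mball x r)"
    using mtopology_eq_prod_top openin_mball by metis
  moreover have "x \<in> mball x r"
    using assms by simp
  ultimately show thesis
    using that by (rule cylinder_subset_openin)
qed

lemma dist_less_if_agree_on_window:
  assumes "0 < e"
  obtains R where "\<And>x y. x \<in> Sigma2 \<Longrightarrow> y \<in> Sigma2 \<Longrightarrow> (\<forall>i. \<bar>i\<bar> \<le> int R \<longrightarrow> x i = y i) \<Longrightarrow> d x y < e"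
proof -
  have "\<exists>R. cylinder x R \<subseteq> mball x (e / 2)" if "x \<in> Sigma2" for x
    using cylinder_subset_mball[OF that, of "e / 2"] assms by auto
  then obtain Rx where Rx: "\<And>x. x \<in> Sigma2 \<Longrightarrow> cylinder x (Rx x) \<subseteq> mball x (e / 2)"
    by metis
  define \<U> where "\<U> = (\<lambda>x. cylinder x (Rx x)) ` Sigma2"
  have "\<forall>U\<in>\<U>. openin prod_top U"
    using openin_cylinder by (auto simp: \<U>_def)
  moreover have "topspace prod_top \<subseteq> \<Union>\<U>"
    unfolding \<U>_def topspace_prod_top by (blast intro: self_in_cylinder)
  ultimately have "(\<forall>U\<in>\<U>. openin prod_top U) \<and> topspace prod_top \<subseteq> \<Union>\<U>" ..
  from compact_space_alt[THEN iffD1, OF compact_space_prod_top, rule_format, OF this]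
  obtain \<F> where \<F>: "finite \<F>" "\<F> \<subseteq> \<U>" "topspace prod_top \<subseteq> \<Union>\<F>"
    by blast
  obtain X where X: "X \<subseteq> Sigma2" "finite X" "\<F> = (\<lambda>x. cylinder x (Rx x)) ` X"
    using finite_subset_image[OF \<F>(1) \<F>(2)[unfolded \<U>_def]] by blast
  define R where "R = (\<Sum>x\<in>X. Rx x)"
  show thesis
  proof (rule that)
    fix u v assume u: "u \<in> Sigma2" and v: "v \<in> Sigma2" and uv: "\<forall>i. \<bar>i\<bar> \<le> int R \<longrightarrow> u i = v i"
    obtain x where x: "x \<in> X" "u \<in> cylinder x (Rx x)"
      using \<F>(3) X(3) u by (auto simp: topspace_prod_top)
    have "Rx x \<le> R" using member_le_sum[OF x(1), of Rx] X(2) by (simp add: R_def)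
    then have "v \<in> cylinder x (Rx x)" using x(2) uv v by (auto simp: cylinder_def)
    then have "u \<in> mball x (e / 2)" "v \<in> mball x (e / 2)" using Rx X(1) x by blast+
    then have "d x u < e / 2" "d x v < e / 2" by simp_all
    then show "d u v < e"
      using triangle[of u x v] commute[of u x] u v x X(1) by auto
  qed
qed

definition dist_at_most_one_two :: "(int \<Rightarrow> nat) \<Rightarrow> real" where
  "dist_at_most_one_two x = (INF y\<in>at_most_one_two. d x y)"

definition phi :: "(int \<Rightarrow> nat) \<Rightarrow> real" where
  "phi x = min 1 (dist_at_most_one_two x)"

definition diag :: "(int \<Rightarrow> nat) \<Rightarrow> real" where
  "diag x = 1 - (phi x)\<^sup>2 / 2"

definition A :: "(int \<Rightarrow> nat) \<Rightarrow> real^2^2" where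
  "A = (\<lambda>x. uptri (diag x) (phi x) (diag x))"

lemma dist_at_most_one_two_nonneg: "0 \<le> dist_at_most_one_two x"
  unfolding dist_at_most_one_two_def using const_1_in_at_most_one_two by (intro cINF_greatest) auto

lemma dist_at_most_one_two_le: "y \<in> at_most_one_two \<Longrightarrow> dist_at_most_one_two x \<le> d x y"
  unfolding dist_at_most_one_two_def by (rule cINF_lower) (auto intro: bdd_belowI[of _ 0])

lemma dist_at_most_one_two_le_add:
  assumes "x \<in> Sigma2" "y \<in> Sigma2"
  shows "dist_at_most_one_two x \<le> dist_at_most_one_two y + d x y"
proof -
  have "dist_at_most_one_two x - d x y \<le> d y z" if "z \<in> at_most_one_two" for z
    using dist_at_most_one_two_le[OF that, of x] triangle[of x y z] assms that
      at_most_one_two_subset_Sigma2 by auto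
  then have "dist_at_most_one_two x - d x y \<le> dist_at_most_one_two y"
    unfolding dist_at_most_one_two_def[of y] using const_1_in_at_most_one_two
    by (intro cINF_greatest) auto
  then show ?thesis by simp
qed

lemma dist_at_most_one_two_pos:
  assumes z: "z \<in> Sigma2" and "z i = 2" "z j = 2" "i \<noteq> j"
  shows "0 < dist_at_most_one_two z"
proof -
  define R where "R = nat (max \<bar>i\<bar> \<bar>j\<bar>)"
  obtain r where r: "0 < r" "mball z r \<subseteq> cylinder z R"
    using mball_subset_cylinder[OF z] .
  have "r \<le> d z y" if y: "y \<in> at_most_one_two" for y
  proof (rule ccontr)
    assume "\<not> r \<le> d z y"
    then have "y \<in> mball z r"
      using y z at_most_one_two_subset_Sigma2 by auto
    then have "y \<in> cylinder z R"
      using r by blast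
    moreover have "\<bar>i\<bar> \<le> int R" "\<bar>j\<bar> \<le> int R"
      by (auto simp: R_def)
    ultimately have "y i = 2" "y j = 2"
      using assms by (auto simp: cylinder_def)
    then show False using y \<open>i \<noteq> j\<close> by (auto simp: at_most_one_two_def)
  qed
  then have "r \<le> dist_at_most_one_two z"
    unfolding dist_at_most_one_two_def using const_1_in_at_most_one_two
    by (intro cINF_greatest) auto
  then show ?thesis using r by simp
qed

lemma phi_nonneg: "0 \<le> phi x" and phi_le_1: "phi x \<le> 1"
  using dist_at_most_one_two_nonneg[of x] by (auto simp: phi_def)

lemma abs_phi_diff_le:
  assumes "x \<in> Sigma2" "y \<in> Sigma2"
  shows "\<bar>phi x - phi y\<bar> \<le> d x y"
  using dist_at_most_one_two_le_add[OF assms] dist_at_most_one_two_le_add[OF assms(2,1)] commute[of x y]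
  by (auto simp: phi_def)

lemma phi_const_1: "phi (\<lambda>_. 1) = 0"
  using dist_at_most_one_two_le[OF const_1_in_at_most_one_two, of "\<lambda>_. 1"]
    dist_at_most_one_two_nonneg[of "\<lambda>_. 1"] const_1_in_at_most_one_two at_most_one_two_subset_Sigma2
  by (auto simp: phi_def)

lemma diag_ge_half: "1 / 2 \<le> diag x" and diag_le_1: "diag x \<le> 1"
  using phi_nonneg[of x] phi_le_1[of x] power_le_one[of "phi x" 2] by (auto simp: diag_def)

lemma diag_pos: "0 < diag x"
  using diag_ge_half[of x] by linarith

lemma diag_nonneg: "0 \<le> diag x"
  using diag_pos[of x] by linarith

lemma abs_diag_diff_le:
  assumes "x \<in> Sigma2" "y \<in> Sigma2"
  shows "\<bar>diag x - diag y\<bar> \<le> d x y"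
proof -
  have eq: "diag x - diag y = (phi y - phi x) * ((phi x + phi y) / 2)"
    unfolding diag_def power2_eq_square by (simp add: field_simps)
  have "\<bar>diag x - diag y\<bar> = \<bar>phi x - phi y\<bar> * ((phi x + phi y) / 2)"
    using phi_nonneg[of x] phi_nonneg[of y] unfolding eq abs_mult by (simp add: abs_minus_commute)
  also have "\<dots> \<le> \<bar>phi x - phi y\<bar> * 1"
    using phi_le_1[of x] phi_le_1[of y] by (intro mult_left_mono) auto
  finally show ?thesis using abs_phi_diff_le[OF assms] by simp
qed

lemma cocycle_A:
  "cocycle A shift n x =
    uptri (\<Prod>k<n. diag ((shift ^^ k) x))
      ((\<Prod>k<n. diag ((shift ^^ k) x)) * (\<Sum>k<n. phi ((shift ^^ k) x) / diag ((shift ^^ k) x)))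
      (\<Prod>k<n. diag ((shift ^^ k) x))"
  unfolding A_def by (rule cocycle_uptri_scalar_diag) (rule diag_pos[THEN less_imp_neq, THEN not_sym])

lemma opnorm_cocycle_A_le: "opnorm (cocycle A shift n x) \<le> 2 + 2 * sqrt (real n)"
proof -
  define P where "P = (\<Prod>k<n. diag ((shift ^^ k) x))"
  define S where "S = (\<Sum>k<n. phi ((shift ^^ k) x) / diag ((shift ^^ k) x))"
  have P: "0 \<le> P" "P \<le> 1"
    unfolding P_def by (intro prod_nonneg diag_nonneg, intro prod_le_1 conjI diag_nonneg diag_le_1)
  have "0 \<le> S"
    unfolding S_def by (intro sum_nonneg divide_nonneg_nonneg phi_nonneg diag_nonneg)
  moreover have "P * S \<le> 2 * sqrt (real n)"
    unfolding P_def S_def diag_def by (rule prod_times_sum_le_sqrt) (simp_all add: phi_nonneg phi_le_1)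
  moreover have "opnorm (cocycle A shift n x) \<le> \<bar>P\<bar> + \<bar>P * S\<bar> + \<bar>P\<bar>"
    unfolding cocycle_A P_def[symmetric] S_def[symmetric] by (rule opnorm_uptri_le)
  ultimately show ?thesis
    using P by (simp add: abs_of_nonneg)
qed

lemma prod_times_sum_phi_le_opnorm_cocycle_A:
  "(\<Prod>k<n. 1 - (phi ((shift ^^ k) x))\<^sup>2 / 2) * (\<Sum>k<n. phi ((shift ^^ k) x))
    \<le> opnorm (cocycle A shift n x)"
proof -
  define P where "P = (\<Prod>k<n. diag ((shift ^^ k) x))"
  have "0 \<le> P"
    unfolding P_def by (intro prod_nonneg diag_nonneg)
  moreover have "phi y \<le> phi y / diag y" for y
    using diag_pos[of y] diag_le_1[of y] phi_nonneg[of y]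
    by (simp add: le_divide_eq mult_left_le)
  then have "(\<Sum>k<n. phi ((shift ^^ k) x)) \<le> (\<Sum>k<n. phi ((shift ^^ k) x) / diag ((shift ^^ k) x))"
    by (intro sum_mono)
  ultimately have "P * (\<Sum>k<n. phi ((shift ^^ k) x))
      \<le> P * (\<Sum>k<n. phi ((shift ^^ k) x) / diag ((shift ^^ k) x))"
    by (rule mult_left_mono[rotated])
  also have "\<dots> \<le> \<bar>P * (\<Sum>k<n. phi ((shift ^^ k) x) / diag ((shift ^^ k) x))\<bar>"
    by (rule abs_ge_self)
  also have "\<dots> \<le> opnorm (cocycle A shift n x)"
    unfolding cocycle_A P_def by (rule abs_le_opnorm_uptri)
  finally show ?thesis by (simp add: P_def diag_def)
qed

lemma one_le_opnorm_cocycle_A_const_1: "1 \<le> opnorm (cocycle A shift n (\<lambda>_. 1))"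
proof -
  have "(shift ^^ k) (\<lambda>_. 1) = (\<lambda>_. 1)" for k
    by (simp add: funpow_shift)
  then have "diag ((shift ^^ k) (\<lambda>_. 1)) = 1" for k
    using phi_const_1 by (simp add: diag_def)
  then have "(\<Prod>k<n. diag ((shift ^^ k) (\<lambda>_. 1))) = 1"
    by simp
  moreover have "\<bar>\<Prod>k<n. diag ((shift ^^ k) (\<lambda>_. 1))\<bar> \<le> opnorm (cocycle A shift n (\<lambda>_. 1))"
    unfolding cocycle_A by (rule abs_le_opnorm_uptri(2))
  ultimately show ?thesis
    by simp
qed

lemma phi_orbit_periodic_two_less:
  assumes "0 < e"
  obtains N where "0 < N" "\<And>k. phi ((shift ^^ k) (periodic_two N)) < e"
proof -
  obtain R where R: "\<And>x y. x \<in> Sigma2 \<Longrightarrow> y \<in> Sigma2 \<Longrightarrow> (\<forall>i. \<bar>i\<bar> \<le> int R \<longrightarrow> x i = y i) \<Longrightarrow> d x y < e"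
    using dist_less_if_agree_on_window[OF assms] by blast
  have "phi ((shift ^^ k) (periodic_two (2 * R + 1))) < e" for k
  proof -
    let ?x = "(shift ^^ k) (periodic_two (2 * R + 1))"
    let ?y = "\<lambda>i. if \<bar>i\<bar> \<le> int R then ?x i else 1"
    have x: "?x \<in> Sigma2"
      by (simp add: funpow_shift_in_Sigma2 periodic_two_in_Sigma2)
    have y: "?y \<in> at_most_one_two"
      by (rule window_periodic_two_in_at_most_one_two)
    then have "dist_at_most_one_two ?x \<le> d ?x ?y"
      by (rule dist_at_most_one_two_le)
    also have "\<dots> < e"
    proof (rule R[OF x])
      show "?y \<in> Sigma2"
        using y at_most_one_two_subset_Sigma2 by blast
    qed simp
    finally show "phi ?x < e"
      by (simp add: phi_def)
  qed
  then show thesis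
    by (rule that[of "2 * R + 1", rotated]) simp
qed

lemma opnorm_cocycle_A_unbounded: "\<exists>n\<ge>1. \<exists>x\<in>Sigma2. M < opnorm (cocycle A shift n x)"
proof -
  define e where "e = 1 / (4 * (\<bar>M\<bar> + 1))"
  have e: "0 < e" "e \<le> 1 / 2"
    by (auto simp: e_def field_simps)
  obtain N where N: "0 < N" "\<And>k. phi ((shift ^^ k) (periodic_two N)) < e"
    using phi_orbit_periodic_two_less[OF e(1)] by blast
  define z where "z = periodic_two N"
  define a where "a k = phi ((shift ^^ k) z)" for k
  have "0 < dist_at_most_one_two z"
    using N(1) by (intro dist_at_most_one_two_pos[of z 0 "int N"]) (auto simp: z_def periodic_two_def Sigma2_iff)
  then have "a 0 \<noteq> 0"
    by (simp add: a_def phi_def)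
  moreover have "a (k + N) = a k" for k
    by (simp only: a_def z_def funpow_shift_periodic_two)
  ultimately have "\<not> summable a"
    using N(1) by (intro not_summable_periodic)
  moreover have "0 \<le> a k" for k
    by (simp add: a_def phi_nonneg)
  moreover have "a k \<le> e" for k
    using N(2)[of k] by (simp add: a_def z_def)
  ultimately obtain n where n: "1 / (4 * e) \<le> (\<Prod>k<n. 1 - (a k)\<^sup>2 / 2) * (\<Sum>k<n. a k)"
    using exists_prod_times_sum_ge[OF e] by blast
  have "M < 1 / (4 * e)"
    by (simp add: e_def)
  also have "\<dots> \<le> opnorm (cocycle A shift n z)"
    using n prod_times_sum_phi_le_opnorm_cocycle_A[where n = n and x = z] unfolding a_def by linarith
  finally have "M < opnorm (cocycle A shift n z)" .
  moreover have "n \<noteq> 0"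
  proof
    assume "n = 0"
    with n e show False by simp
  qed
  ultimately show ?thesis
    using periodic_two_in_Sigma2[of N] unfolding z_def
    by (intro exI[of _ n] conjI bexI[of _ "periodic_two N"]) simp_all
qed

lemma bdd_above_opnorm_cocycle_A: "bdd_above ((\<lambda>x. opnorm (cocycle A shift n x)) ` Sigma2)"
  using opnorm_cocycle_A_le by (intro bdd_aboveI2) blast

lemma SUP_opnorm_cocycle_A_bounds:
  "1 \<le> (SUP x\<in>Sigma2. opnorm (cocycle A shift n x))"
  "(SUP x\<in>Sigma2. opnorm (cocycle A shift n x)) \<le> 2 + 2 * sqrt (real n)"
proof -
  have const_1: "(\<lambda>_. 1) \<in> Sigma2"
    by (simp add: Sigma2_iff)
  show "1 \<le> (SUP x\<in>Sigma2. opnorm (cocycle A shift n x))"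
    using one_le_opnorm_cocycle_A_const_1 cSUP_upper[OF const_1 bdd_above_opnorm_cocycle_A]
    by (rule order_trans)
  show "(SUP x\<in>Sigma2. opnorm (cocycle A shift n x)) \<le> 2 + 2 * sqrt (real n)"
    using const_1 opnorm_cocycle_A_le by (intro cSUP_least) auto
qed

end

theorem theorem2:
  fixes d :: "(int \<Rightarrow> nat) \<Rightarrow> (int \<Rightarrow> nat) \<Rightarrow> real"
  assumes "Metric_space Sigma2 d"
    and "Metric_space.mtopology Sigma2 d = prod_top"
  shows "\<exists>f g \<phi> :: (int \<Rightarrow> nat) \<Rightarrow> real.
     (\<forall>x\<in>Sigma2. 0 < f x \<and> f x \<le> 1 \<and> 0 < g x \<and> g x \<le> 1)
   \<and> lipschitz_wrt d Sigma2 f \<and> lipschitz_wrt d Sigma2 g \<and> lipschitz_wrt d Sigma2 \<phi>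
   \<and> (let A = (\<lambda>x. uptri (f x) (\<phi> x) (g x)) in
        (\<forall>n. bdd_above ((\<lambda>x. opnorm (cocycle A shift n x)) ` Sigma2))
      \<and> ((\<lambda>n. (SUP x\<in>Sigma2. opnorm (cocycle A shift n x)) powr (1 / real n)) \<longlonglongrightarrow> 1)
      \<and> ((\<lambda>n. (SUP x\<in>Sigma2. opnorm (cocycle A shift n x)) / real n) \<longlonglongrightarrow> 0)
      \<and> (\<forall>M. \<exists>n\<ge>1. \<exists>x\<in>Sigma2. opnorm (cocycle A shift n x) > M))"
proof -
  interpret Sigma2_metric d
    using assms by (intro Sigma2_metric.intro Sigma2_metric_axioms.intro)
  have lipschitz: "lipschitz_wrt d Sigma2 diag" "lipschitz_wrt d Sigma2 phi"
    unfolding lipschitz_wrt_def by (intro exI[of _ 1]; simp add: abs_diag_diff_le abs_phi_diff_le)+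
  have SUP_nonneg: "0 \<le> (SUP x\<in>Sigma2. opnorm (cocycle A shift n x))" for n
    using SUP_opnorm_cocycle_A_bounds(1)[of n] by linarith
  have root_limit: "(\<lambda>n. (SUP x\<in>Sigma2. opnorm (cocycle A shift n x)) powr (1 / real n)) \<longlonglongrightarrow> 1"
    using SUP_opnorm_cocycle_A_bounds by (rule powr_inverse_tendsto_1_if_sqrt_bounded)
  have linear_limit: "(\<lambda>n. (SUP x\<in>Sigma2. opnorm (cocycle A shift n x)) / real n) \<longlonglongrightarrow> 0"
    using SUP_nonneg SUP_opnorm_cocycle_A_bounds(2) by (rule divide_tendsto_0_if_sqrt_bounded)
  have A_eq: "(\<lambda>x. uptri (diag x) (phi x) (diag x)) = A"
    by (simp add: A_def)
  show ?thesis
    by (rule exI[where x = diag], rule exI[where x = diag], rule exI[where x = phi])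
      (simp add: Let_def A_eq diag_pos diag_le_1 lipschitz bdd_above_opnorm_cocycle_A
        root_limit linear_limit opnorm_cocycle_A_unbounded[simplified])
qed

end
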